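(* Let $A,B\in\mathbb{R}^{n\times n}$ be two rank-one positive semi-definite matrices and let $C=A-B$. Then $c:=2\,\mathrm{tr}[C^2]-(\mathrm{tr}[C])^2\ge 0$, with $c=0$ if and only if $A=B$. *)

theory Defs
  imports "HOL-Analysis.Analysis"
begin

definition psd :: "real^'n^'n \<Rightarrow> bool" where
  "psd A \<longleftrightarrow> transpose A = A \<and> (\<forall>x. 0 \<le> x \<bullet> (A *v x))"

end

theory Submission
  imports Defs
begin

text \<open>A rank-one positive semi-definite matrix is an outer product \<open>a a\<^sup>T\<close>. For
  \<open>C = a a\<^sup>T - b b\<^sup>T\<close> the traces are polynomials in the Gram entries, and
  \<open>2 tr[C\<^sup>2] - (tr C)\<^sup>2 = (|a|\<^sup>2 + |b|\<^sup>2)\<^sup>2 - 4 (a\<cdot>b)\<^sup>2 = |a - b|\<^sup>2 |a + b|\<^sup>2\<close>,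
  which is nonnegative and vanishes exactly when \<open>a = \<plusminus>b\<close>, i.e. when \<open>A = B\<close>.\<close>

definition outer_prod :: "real^'m \<Rightarrow> real^'n \<Rightarrow> real^'n^'m" where
  "outer_prod u v = (\<chi> i j. u$i * v$j)"

lemma outer_prod_nth [simp]: "outer_prod u v $ i $ j = u$i * v$j"
  by (simp add: outer_prod_def)

lemma transpose_outer_prod: "transpose (outer_prod u v) = outer_prod v u"
  by (simp add: vec_eq_iff transpose_def)

lemma outer_prod_scaleR_left: "outer_prod (c *\<^sub>R u) v = c *\<^sub>R outer_prod u v"
  by (simp add: vec_eq_iff)

lemma outer_prod_scaleR_right: "outer_prod u (c *\<^sub>R v) = c *\<^sub>R outer_prod u v"
  by (simp add: vec_eq_iff)

lemma outer_prod_uminus: "outer_prod (- u) (- v) = outer_prod u v"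
  by (simp add: vec_eq_iff)

lemma outer_prod_mult_vec: "outer_prod u v *v x = (v \<bullet> x) *\<^sub>R u"
  by (simp add: vec_eq_iff matrix_vector_mult_def inner_vec_def sum_distrib_left algebra_simps)

lemma outer_prod_mult: "outer_prod a b ** outer_prod c d = (b \<bullet> c) *\<^sub>R outer_prod a d"
  by (simp add: vec_eq_iff matrix_matrix_mult_def inner_vec_def sum_distrib_left
      sum_distrib_right algebra_simps)

lemma trace_outer_prod: "trace (outer_prod u v) = u \<bullet> v"
  by (simp add: trace_def inner_vec_def)

lemma trace_scaleR: "trace (c *\<^sub>R A) = c * trace (A :: real^'n^'n)"
  by (simp add: trace_def sum_distrib_left)

lemma matrix_mult_diff_square:
  fixes A B :: "real^'n^'n"
  shows "(A - B) ** (A - B) = A ** A - A ** B - B ** A + B ** B"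
  by (simp add: vec_eq_iff matrix_matrix_mult_def sum_subtractf sum.distrib algebra_simps)

lemma trace_diff_square:
  fixes A B :: "real^'n^'n"
  shows "trace ((A - B) ** (A - B)) = trace (A ** A) - 2 * trace (A ** B) + trace (B ** B)"
  by (simp add: matrix_mult_diff_square trace_add trace_sub trace_mul_sym[of B A])

lemma rank_one_eq_outer_prod:
  fixes A :: "real^'n^'m"
  assumes "rank A = 1"
  obtains c u where "u \<noteq> 0" "A = outer_prod c u"
proof -
  obtain S where S: "independent S" "rows A \<subseteq> span S" "card S = dim (rows A)"
    using basis_exists[of "rows A"] by blast
  then obtain u where u: "S = {u}"
    using assms by (metis card_1_singletonE row_rank_def)
  have "\<exists>k. row i A = k *\<^sub>R u" for i
  proof -
    have "row i A \<in> rows A" by (auto simp: rows_def)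
    then show ?thesis using S(2) u by (auto simp: span_singleton)
  qed
  then obtain c where c: "\<And>i. row i A = c i *\<^sub>R u" by metis
  have "A$i$j = c i * u$j" for i j
    using arg_cong[where f="\<lambda>v. v $ j", OF c[of i]] by (simp add: row_def)
  then have "A = outer_prod (\<chi> i. c i) u"
    by (simp add: vec_eq_iff)
  moreover have "u \<noteq> 0" using S(1) u by (simp add: dependent_single)
  ultimately show thesis using that by blast
qed

lemma psd_rank_one_eq_outer_prod_self:
  fixes A :: "real^'n^'n"
  assumes "psd A" and "rank A = 1"
  obtains a where "A = outer_prod a a"
proof -
  obtain c u where "u \<noteq> 0" and A: "A = outer_prod c u"
    using rank_one_eq_outer_prod[OF assms(2)] .
  then obtain k where k: "u$k \<noteq> 0" by (metis vec_eq_iff zero_index)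
  define l where "l = c$k / u$k"
  have "outer_prod c u = outer_prod u c"
    using assms(1) A by (simp add: psd_def transpose_outer_prod)
  then have "c$i * u$k = u$i * c$k" for i
    by (metis outer_prod_nth)
  then have "c = l *\<^sub>R u"
    using k by (simp add: vec_eq_iff l_def field_simps)
  then have A_eq: "A = l *\<^sub>R outer_prod u u"
    by (simp add: A outer_prod_scaleR_left)
  have "0 \<le> u \<bullet> (A *v u)"
    using assms(1) by (simp add: psd_def)
  also have "\<dots> = l * (u \<bullet> u)^2"
    by (simp add: A_eq scaleR_matrix_vector_assoc[symmetric] outer_prod_mult_vec power2_eq_square)
  finally have "0 \<le> l"
    using \<open>u \<noteq> 0\<close> by (simp add: zero_le_mult_iff)
  then have "A = outer_prod (sqrt l *\<^sub>R u) (sqrt l *\<^sub>R u)"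
    by (simp add: A_eq outer_prod_scaleR_left outer_prod_scaleR_right)
  then show thesis ..
qed

lemma trace_square_gap_outer_prod_self:
  fixes a b :: "real^'n"
  defines "C \<equiv> outer_prod a a - outer_prod b b"
  shows "2 * trace (C ** C) - (trace C)^2 = ((a - b) \<bullet> (a - b)) * ((a + b) \<bullet> (a + b))"
  unfolding C_def
  by (simp add: trace_diff_square trace_sub outer_prod_mult trace_scaleR trace_outer_prod
      inner_diff inner_add inner_commute power2_eq_square algebra_simps)

theorem proposition1:
  fixes A B :: "real^'n^'n"
  assumes "psd A" and "rank A = 1"
      and "psd B" and "rank B = 1"
  shows "2 * trace ((A - B) ** (A - B)) - (trace (A - B))^2 \<ge> 0
         \<and> (2 * trace ((A - B) ** (A - B)) - (trace (A - B))^2 = 0 \<longleftrightarrow> A = B)"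
proof -
  obtain a where A: "A = outer_prod a a"
    using psd_rank_one_eq_outer_prod_self[OF assms(1,2)] .
  obtain b where B: "B = outer_prod b b"
    using psd_rank_one_eq_outer_prod_self[OF assms(3,4)] .
  have gap: "2 * trace ((A - B) ** (A - B)) - (trace (A - B))^2
      = ((a - b) \<bullet> (a - b)) * ((a + b) \<bullet> (a + b))"
    unfolding A B by (rule trace_square_gap_outer_prod_self)
  have "0 \<le> ((a - b) \<bullet> (a - b)) * ((a + b) \<bullet> (a + b))"
    by simp
  moreover have "((a - b) \<bullet> (a - b)) * ((a + b) \<bullet> (a + b)) = 0 \<longleftrightarrow> A = B"
  proof
    assume "((a - b) \<bullet> (a - b)) * ((a + b) \<bullet> (a + b)) = 0"
    then have "a = b \<or> a = - b"
      by (auto simp: add_eq_0_iff)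
    then show "A = B"
      unfolding A B by (auto simp: outer_prod_uminus)
  next
    assume "A = B"
    then show "((a - b) \<bullet> (a - b)) * ((a + b) \<bullet> (a + b)) = 0"
      using gap by (simp add: trace_def)
  qed
  ultimately show ?thesis
    unfolding gap by blast
qed

end
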